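(* Let $0<\alpha<1$, $\sigma>0$, $N_1$ a positive integer, $h=\sigma^2\alpha^2$, $T=\sigma\alpha\sqrt{N_1}$, $\kappa=\frac\alpha{1-\alpha}$, and let $n\ge1$ be an integer. For $x\in(0,1]$ and complex $u\notin(-\infty,0]$ let $$f(u,x)=\frac{\sin(\alpha\pi)}{\alpha\pi}\frac{1}{2\sqrt u}\frac{xe^{\sqrt u-T}}{e^{\frac1\alpha(\sqrt u-T)}+x}$$ (principal branch of $\sqrt u$). Let $u^*=\frac{1+(1-2\alpha)\sqrt{4\alpha-4\alpha^2+1}}{2(1-\alpha)^2}$, $\gamma=\alpha\log\!\Big(\frac{\frac1\kappa\sqrt{u^*}+1}{\sqrt{u^*}-1}\Big)+\sqrt{u^*}$, $x^*=e^{\frac1\alpha(\gamma-T)}$, $M_0=2\max\left\{\frac{\sigma^2}{4},1+\mathrm{ceil}\!\left(\frac{9\pi^2}{\sigma^2}\right),2\,\mathrm{ceil}\!\left[\left(1+\sqrt{\pi/\sigma}\right)^4\right]\right\}$, and $\Upsilon=\{x\in[x^*,1]:(T+\alpha\log x)^2-\alpha^2\pi^2>M_0h\}$. For $x\in\Upsilon$ put $a=2\alpha\pi(T+\alpha\log x)$. Then, for each choice of sign, $$\left|\int_{h\pm2ia}^{+\infty\pm2ia}f(u,x)e^{\pm i\frac{2n\pi}{h}u}\,\mathrm{d}u\right|=e^{-\frac{4n\pi a}{h}}\left|\int_h^{+\infty}f(t\pm2ia,x)e^{\pm i\frac{2n\pi}{h}t}\,\mathrm{d}t\right|=e^{-\frac{4n\pi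 a}{h}}x^\alpha\,\mathcal{O}(1)$$ uniformly for $x\in\Upsilon$, where the constant in $\mathcal{O}(1)$ is independent of $x$, $h$, $\alpha$, $\sigma$ and $T$.
   Context: $\mathrm{ceil}(y)$ is the least integer $\ge y$. The integral $\int_{h\pm2ia}^{+\infty\pm2ia}$ is along the horizontal half-line $\{t\pm2ia:t\ge h\}$. *)

theory Defs
  imports "HOL-Analysis.Analysis"
begin

definition hA :: "real \<Rightarrow> real \<Rightarrow> real" where
  "hA \<alpha> \<sigma> = \<sigma>^2 * \<alpha>^2"

definition TA :: "real \<Rightarrow> real \<Rightarrow> nat \<Rightarrow> real" where
  "TA \<alpha> \<sigma> N1 = \<sigma> * \<alpha> * sqrt (real N1)"

definition kappaA :: "real \<Rightarrow> real" where
  "kappaA \<alpha> = \<alpha> / (1 - \<alpha>)"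

definition fA :: "real \<Rightarrow> real \<Rightarrow> complex \<Rightarrow> real \<Rightarrow> complex" where
  "fA \<alpha> T u x =
     complex_of_real (sin (\<alpha> * pi) / (\<alpha> * pi)) * (1 / (2 * csqrt u)) *
     (complex_of_real x * exp (csqrt u - complex_of_real T)) /
     (exp ((csqrt u - complex_of_real T) / complex_of_real \<alpha>) + complex_of_real x)"

definition ustarA :: "real \<Rightarrow> real" where
  "ustarA \<alpha> = (1 + (1 - 2*\<alpha>) * sqrt (4*\<alpha> - 4*\<alpha>^2 + 1)) / (2 * (1 - \<alpha>)^2)"

definition gammaA :: "real \<Rightarrow> real" where
  "gammaA \<alpha> = \<alpha> * ln ((sqrt (ustarA \<alpha>) / kappaA \<alpha> + 1) / (sqrt (ustarA \<alpha>) - 1))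
               + sqrt (ustarA \<alpha>)"

definition xstarA :: "real \<Rightarrow> real \<Rightarrow> real" where
  "xstarA \<alpha> T = exp ((gammaA \<alpha> - T) / \<alpha>)"

definition M0A :: "real \<Rightarrow> real" where
  "M0A \<sigma> = 2 * max (\<sigma>^2 / 4)
       (max (1 + real_of_int (ceiling (9 * pi^2 / \<sigma>^2)))
            (2 * real_of_int (ceiling ((1 + sqrt (pi / \<sigma>)) ^ 4))))"

definition UpsilonA :: "real \<Rightarrow> real \<Rightarrow> nat \<Rightarrow> real set" where
  "UpsilonA \<alpha> \<sigma> N1 =
     {x. xstarA \<alpha> (TA \<alpha> \<sigma> N1) \<le> x \<and> x \<le> 1 \<and>
         (TA \<alpha> \<sigma> N1 + \<alpha> * ln x)^2 - \<alpha>^2 * pi^2 > M0A \<sigma> * hA \<alpha> \<sigma>}"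

text \<open>Integral along the horizontal half-line {t + c : t \<ge> h}, parametrised by t (du = dt).\<close>
definition halfline_integral :: "(complex \<Rightarrow> complex) \<Rightarrow> real \<Rightarrow> complex \<Rightarrow> complex" where
  "halfline_integral g h c = integral {h..} (\<lambda>t. g (complex_of_real t + c))"

end

theory Submission
  imports Defs
begin

text \<open>
  On the line u = t + i b with b = 4 alpha pi L, where L = T + alpha log x, write z = sqrt u,
  P(t) = Re z (re_sqrt b t below), r(t) = |u| and K = sin(alpha pi)/(alpha pi). Then
  |f(u,x)| = K x^alpha e^(P - L) / (2 |z| |1 + w|) with w = e^((z - L)/alpha).
  On Upsilon one has |L| >= 5 alpha, which keeps w away from -1: either |w| is at least e or at
  most 1/e, or Re z is within alpha of L, and then the argument of w is close to 2 pi.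
  Hence |1 + w| >= max 1 |w| / 2, so |f| <= K x^alpha e^(k (P - L)) / P for k = 1 and for
  k = 1 - 1/alpha. Since 1/P <= 2P/r and P' = P/(2r), both envelopes have the explicit
  primitives (4/k) e^(k (P - L)). Integrating the first one up to the point where P = L and the
  second one beyond it bounds the integral by 4 K x^alpha (1 + alpha/(1 - alpha)) <= 8 x^alpha.
  The factor e^(-4 n pi a / h) is the modulus of the oscillating factor on the shifted line.
\<close>

lemma norm_one_plus_ge_half_max:
  fixes z :: complex
  assumes "norm z \<le> 1/2 \<or> 2 \<le> norm z \<or> 0 \<le> Re z"
  shows "max 1 (norm z) / 2 \<le> norm (1 + z)"
proof (cases "0 \<le> Re z")
  case True
  have "1 \<le> Re (1 + z)" using True by simp
  also have "\<dots> \<le> norm (1 + z)" by (rule complex_Re_le_cmod)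
  finally have one: "1 \<le> norm (1 + z)" .
  have "(norm z)\<^sup>2 = (Re z)\<^sup>2 + (Im z)\<^sup>2" by (simp add: cmod_power2)
  also have "\<dots> \<le> (1 + Re z)\<^sup>2 + (Im z)\<^sup>2" using True by (intro add_right_mono power_mono) auto
  also have "\<dots> = (norm (1 + z))\<^sup>2" by (simp add: cmod_power2)
  finally have "(norm z)\<^sup>2 \<le> (norm (1 + z))\<^sup>2" .
  then have "norm z \<le> norm (1 + z)" by (simp add: power2_le_iff_abs_le)
  with one show ?thesis by simp
next
  case False
  then show ?thesis
    using assms norm_diff_ineq[of 1 z] norm_diff_ineq[of z 1] by (auto simp: add.commute)
qed

lemma cos_nonneg_three_halves_pi:
  fixes y :: real
  assumes "3 * pi / 2 \<le> y" "y \<le> 5 * pi / 2"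
  shows "0 \<le> cos y"
proof -
  have "cos y = cos (y - 2 * pi)" by (simp add: cos_diff)
  also have "0 \<le> cos (y - 2 * pi)" using assms by (intro cos_ge_zero) auto
  finally show ?thesis .
qed

lemma abs_lt_sqrt_square_add:
  fixes b t :: real
  assumes "b \<noteq> 0"
  shows "\<bar>t\<bar> < sqrt (t\<^sup>2 + b\<^sup>2)"
  using assms by (metis add.commute less_add_same_cancel2 real_less_rsqrt power2_abs zero_less_power2)

definition re_sqrt :: "real \<Rightarrow> real \<Rightarrow> real" where
  "re_sqrt b t = Re (csqrt (Complex t b))"

lemma re_sqrt_eq: "re_sqrt b t = sqrt ((sqrt (t\<^sup>2 + b\<^sup>2) + t) / 2)"
  by (simp add: re_sqrt_def cmod_def)

lemma re_sqrt_pos: "b \<noteq> 0 \<Longrightarrow> 0 < re_sqrt b t"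
  using abs_lt_sqrt_square_add[of b t] by (auto simp: re_sqrt_eq abs_less_iff)

lemma sqrt_le_re_sqrt: "0 \<le> t \<Longrightarrow> sqrt t \<le> re_sqrt b t"
  unfolding re_sqrt_eq by (intro real_sqrt_le_mono) (use real_sqrt_le_mono[of "t\<^sup>2" "t\<^sup>2 + b\<^sup>2"] in simp)

lemma filterlim_re_sqrt_at_top: "filterlim (re_sqrt b) at_top at_top"
proof (rule filterlim_at_top_mono[OF sqrt_at_top])
  show "\<forall>\<^sub>F t in at_top. sqrt t \<le> re_sqrt b t"
    by (intro eventually_at_top_linorderI[of 0] sqrt_le_re_sqrt)
qed

lemma re_sqrt_square_eq:
  fixes b L :: real
  assumes "0 < L"
  shows "re_sqrt b (L\<^sup>2 - (b / (2 * L))\<^sup>2) = L"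
proof -
  have "csqrt (Complex (L\<^sup>2 - (b / (2 * L))\<^sup>2) b) = Complex L (b / (2 * L))"
    using assms by (intro csqrt_unique) (simp_all add: complex_eq_iff power2_eq_square field_simps)
  then show ?thesis by (simp add: re_sqrt_def)
qed

lemma has_real_derivative_re_sqrt:
  fixes b t :: real
  assumes "b \<noteq> 0"
  shows "(re_sqrt b has_real_derivative re_sqrt b t / (2 * sqrt (t\<^sup>2 + b\<^sup>2))) (at t)"
proof -
  define r where "r = sqrt (t\<^sup>2 + b\<^sup>2)"
  have r: "\<bar>t\<bar> < r" using abs_lt_sqrt_square_add[OF assms] by (simp add: r_def)
  have "0 < t\<^sup>2 + b\<^sup>2" using assms by (simp add: add_nonneg_pos)
  moreover have "0 < (r + t) / 2" using r by (simp add: abs_less_iff)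
  ultimately
  have "(re_sqrt b has_real_derivative
      inverse (sqrt ((r + t) / 2)) / 2 * ((inverse r / 2 * (2 * t) + 1) / 2)) (at t)"
    unfolding re_sqrt_eq[abs_def] r_def
    by (auto intro!: derivative_eq_intros)
  moreover have "inverse (sqrt ((r + t) / 2)) / 2 * ((inverse r / 2 * (2 * t) + 1) / 2)
      = re_sqrt b t / (2 * r)"
  proof -
    have "sqrt ((r + t) / 2) * sqrt ((r + t) / 2) = (r + t) / 2" "0 < sqrt ((r + t) / 2)"
      using \<open>0 < (r + t) / 2\<close> by simp_all
    moreover have "re_sqrt b t = sqrt ((r + t) / 2)" by (simp add: re_sqrt_eq r_def)
    ultimately show ?thesis using r by (simp add: field_simps)
  qed
  ultimately show ?thesis by (simp add: r_def)
qed

lemma re_sqrt_mono: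
  assumes "b \<noteq> 0" "s \<le> t"
  shows "re_sqrt b s \<le> re_sqrt b t"
proof (rule DERIV_nonneg_imp_nondecreasing[OF \<open>s \<le> t\<close>])
  fix y
  have "0 \<le> re_sqrt b y / (2 * sqrt (y\<^sup>2 + b\<^sup>2))"
    using re_sqrt_pos[OF assms(1), of y] by simp
  then show "\<exists>d. (re_sqrt b has_real_derivative d) (at y) \<and> 0 \<le> d"
    using has_real_derivative_re_sqrt[OF assms(1)] by blast
qed

lemma re_sqrt_level_point:
  fixes b h L :: real
  assumes "b \<noteq> 0"
  obtains t1 where "h \<le> t1" "L \<le> re_sqrt b t1" "t1 = h \<or> re_sqrt b t1 = L"
proof (cases "L \<le> re_sqrt b h")
  case False
  define t0 where "t0 = L\<^sup>2 - (b / (2 * L))\<^sup>2"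
  have "0 < L" using False re_sqrt_pos[OF assms, of h] by simp
  then have "re_sqrt b t0 = L" unfolding t0_def by (rule re_sqrt_square_eq)
  moreover have "h \<le> t0" using False re_sqrt_mono[OF assms, of t0 h] \<open>re_sqrt b t0 = L\<close> by force
  ultimately show ?thesis using that by simp
qed (use that in auto)

lemma one_div_re_sqrt_le:
  assumes "b \<noteq> 0" "0 \<le> t"
  shows "1 / re_sqrt b t \<le> 2 * re_sqrt b t / sqrt (t\<^sup>2 + b\<^sup>2)"
proof -
  have P: "0 < re_sqrt b t" using re_sqrt_pos[OF assms(1)] .
  have r: "0 < sqrt (t\<^sup>2 + b\<^sup>2)" using abs_lt_sqrt_square_add[OF assms(1), of t] by linarith
  have "(re_sqrt b t)\<^sup>2 = (sqrt (t\<^sup>2 + b\<^sup>2) + t) / 2"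
    using r assms(2) by (simp add: re_sqrt_eq)
  then have "sqrt (t\<^sup>2 + b\<^sup>2) \<le> 2 * (re_sqrt b t)\<^sup>2" using assms(2) by simp
  then show ?thesis using P r by (simp add: field_simps power2_eq_square)
qed

lemma exp_re_sqrt_tendsto_zero:
  assumes "k < 0"
  shows "((\<lambda>t. exp (k * (re_sqrt b t - L))) \<longlongrightarrow> 0) at_top"
proof -
  have "filterlim (\<lambda>t. re_sqrt b t - L) at_top at_top"
    using filterlim_tendsto_add_at_top[OF tendsto_const filterlim_re_sqrt_at_top, of "-L" b]
    by simp
  then have "filterlim (\<lambda>t. k * (re_sqrt b t - L)) at_bot at_top"
    using assms by (intro filterlim_tendsto_neg_mult_at_bot[OF tendsto_const]) auto
  then show ?thesis by (rule filterlim_compose[OF exp_at_bot])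
qed

lemma has_integral_at_top_FTC_nonneg:
  fixes f g :: "real \<Rightarrow> real"
  assumes deriv: "\<And>t. a \<le> t \<Longrightarrow> (f has_real_derivative g t) (at t)"
    and nonneg: "\<And>t. a \<le> t \<Longrightarrow> 0 \<le> g t"
    and lim: "(f \<longlongrightarrow> l) at_top"
  shows "(g has_integral (l - f a)) {a..}"
proof (rule has_integral_to_inf[OF _ _ nonneg])
  have FTC: "(g has_integral (f y - f a)) {a..y}" if "a \<le> y" for y
    using that deriv by (intro fundamental_theorem_of_calculus)
      (auto simp: has_real_derivative_iff_has_vector_derivative[symmetric]
        intro: has_field_derivative_at_within)
  show "g integrable_on {a..y}" for y
    using FTC[of y] by (cases "a \<le> y") auto
  have "\<forall>\<^sub>F y in at_top. f y - f a = integral {a..y} g"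
    using FTC by (intro eventually_at_top_linorderI[of a]) (metis integral_unique)
  moreover have "((\<lambda>y. f y - f a) \<longlongrightarrow> l - f a) at_top"
    using lim by (intro tendsto_diff tendsto_const)
  ultimately show "((\<lambda>y. integral {a..y} g) \<longlongrightarrow> l - f a) at_top"
    by (rule Lim_transform_eventually[rotated])
qed

lemma has_real_derivative_exp_re_sqrt:
  assumes "b \<noteq> 0" "k \<noteq> 0"
  shows "((\<lambda>t. 4 / k * exp (k * (re_sqrt b t - L))) has_real_derivative
           exp (k * (re_sqrt b t - L)) * (2 * re_sqrt b t / sqrt (t\<^sup>2 + b\<^sup>2))) (at t)"
proof -
  have "((\<lambda>t. 4 / k * exp (k * (re_sqrt b t - L))) has_real_derivative
      4 / k * (exp (k * (re_sqrt b t - L)) * (k * (re_sqrt b t / (2 * sqrt (t\<^sup>2 + b\<^sup>2)) - 0))))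
      (at t)"
    by (intro DERIV_cmult DERIV_chain2[OF DERIV_exp] DERIV_cmult DERIV_diff
        has_real_derivative_re_sqrt[OF assms(1)] DERIV_const)
  then show ?thesis using assms(2) by (simp add: field_simps)
qed

lemma has_integral_exp_re_sqrt:
  assumes "b \<noteq> 0" "k \<noteq> 0" "s \<le> t"
  shows "((\<lambda>y. exp (k * (re_sqrt b y - L)) * (2 * re_sqrt b y / sqrt (y\<^sup>2 + b\<^sup>2)))
          has_integral 4 / k * (exp (k * (re_sqrt b t - L)) - exp (k * (re_sqrt b s - L)))) {s..t}"
  using has_real_derivative_exp_re_sqrt[OF assms(1,2)] assms(3)
  by (subst right_diff_distrib, intro fundamental_theorem_of_calculus)
    (auto simp: has_real_derivative_iff_has_vector_derivative[symmetric]
      intro: has_field_derivative_at_within)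

lemma has_integral_exp_re_sqrt_at_top:
  assumes "b \<noteq> 0" "k < 0"
  shows "((\<lambda>y. exp (k * (re_sqrt b y - L)) * (2 * re_sqrt b y / sqrt (y\<^sup>2 + b\<^sup>2)))
          has_integral - 4 / k * exp (k * (re_sqrt b s - L))) {s..}"
proof -
  have "((\<lambda>t. 4 / k * exp (k * (re_sqrt b t - L))) \<longlongrightarrow> 4 / k * 0) at_top"
    by (intro tendsto_mult tendsto_const exp_re_sqrt_tendsto_zero assms(2))
  moreover have "0 \<le> exp (k * (re_sqrt b y - L)) * (2 * re_sqrt b y / sqrt (y\<^sup>2 + b\<^sup>2))" for y
    using re_sqrt_pos[OF assms(1), of y] by simp
  ultimately have "((\<lambda>y. exp (k * (re_sqrt b y - L)) * (2 * re_sqrt b y / sqrt (y\<^sup>2 + b\<^sup>2)))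
          has_integral 4 / k * 0 - 4 / k * exp (k * (re_sqrt b s - L))) {s..}"
    using assms by (intro has_integral_at_top_FTC_nonneg has_real_derivative_exp_re_sqrt) auto
  then show ?thesis by simp
qed

lemma has_integral_exp_re_sqrt_below_level:
  assumes "b \<noteq> 0" "h \<le> t1" "t1 = h \<or> re_sqrt b t1 = L"
  shows "\<exists>I \<le> 4. ((\<lambda>y. exp (1 * (re_sqrt b y - L)) * (2 * re_sqrt b y / sqrt (y\<^sup>2 + b\<^sup>2)))
           has_integral I) {h..t1}"
proof -
  have "4 / 1 * (exp (1 * (re_sqrt b t1 - L)) - exp (1 * (re_sqrt b h - L))) \<le> 4"
    using assms(3) by auto
  with has_integral_exp_re_sqrt[OF assms(1) one_neq_zero assms(2), of L] show ?thesis by blast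
qed

lemma has_integral_exp_re_sqrt_above_level:
  assumes "b \<noteq> 0" "k < 0" "L \<le> re_sqrt b t1"
  shows "\<exists>I \<le> - 4 / k. ((\<lambda>y. exp (k * (re_sqrt b y - L)) * (2 * re_sqrt b y / sqrt (y\<^sup>2 + b\<^sup>2)))
           has_integral I) {t1..}"
proof -
  have "exp (k * (re_sqrt b t1 - L)) \<le> 1" using assms(2,3) by (simp add: mult_nonpos_nonneg)
  moreover have "0 \<le> - 4 / k" using assms(2) by simp
  ultimately have "- 4 / k * exp (k * (re_sqrt b t1 - L)) \<le> - 4 / k" by (rule mult_left_le)
  with has_integral_exp_re_sqrt_at_top[OF assms(1,2), of L t1] show ?thesis by blast
qed

lemma continuous_on_dominated_integral:
  fixes f :: "'a::euclidean_space \<Rightarrow> 'b::euclidean_space"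
  assumes "continuous_on S f" "closed S" "(g has_integral I) S" "\<And>t. t \<in> S \<Longrightarrow> norm (f t) \<le> g t"
  shows "f integrable_on S" "norm (integral S f) \<le> I"
proof -
  have meas: "f \<in> borel_measurable (lebesgue_on S)" "S \<in> sets lebesgue"
    using assms(1,2) by (auto intro: continuous_imp_measurable_on_sets_lebesgue)
  have "f absolutely_integrable_on S"
    using measurable_bounded_by_integrable_imp_absolutely_integrable[OF meas _ assms(4)] assms(3)
    by blast
  then show "f integrable_on S" by (rule set_lebesgue_integral_eq_integral(1))
  show "norm (integral S f) \<le> I"
    using integral_norm_bound_integral'[OF assms(4) meas assms(3)] .
qed

lemma integral_atLeast_split:
  fixes f :: "real \<Rightarrow> 'a::banach"
  assumes "a \<le> c" "f integrable_on {a..c}" "f integrable_on {c..}"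
  shows "f integrable_on {a..}" "integral {a..} f = integral {a..c} f + integral {c..} f"
proof -
  have "{a..c} \<union> {c..} = {a..}" "{a..c} \<inter> {c..} = {c}" using assms(1) by auto
  then have "(f has_integral (integral {a..c} f + integral {c..} f)) {a..}"
    using has_integral_Un[OF integrable_integral[OF assms(2)] integrable_integral[OF assms(3)]]
    by simp
  then show "f integrable_on {a..}" "integral {a..} f = integral {a..c} f + integral {c..} f"
    by (auto simp: integral_unique)
qed

lemma Re_mult_Im_csqrt: "Re (csqrt u) * Im (csqrt u) = Im u / 2"
proof -
  have "Im u = Im ((csqrt u)\<^sup>2)" by (simp only: power2_csqrt)
  also have "\<dots> = 2 * Re (csqrt u) * Im (csqrt u)" by (rule Im_power2)
  finally show ?thesis by linarith
qed

lemma norm_one_plus_exp_ge: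
  fixes z :: complex and \<alpha> L :: real
  assumes \<alpha>: "0 < \<alpha>" and L: "5 * \<alpha> \<le> \<bar>L\<bar>" and p: "0 < Re z"
    and Im: "\<bar>Re z * Im z\<bar> = 2 * \<alpha> * pi * \<bar>L\<bar>"
  shows "max 1 (exp ((Re z - L) / \<alpha>)) / 2 \<le> norm (1 + exp ((z - of_real L) / of_real \<alpha>))"
proof -
  define w where "w = exp ((z - of_real L) / of_real \<alpha>)"
  have norm_w: "norm w = exp ((Re z - L) / \<alpha>)"
    by (simp add: w_def norm_exp_eq_Re Re_divide_of_real)
  have "norm w \<le> 1/2 \<or> 2 \<le> norm w \<or> 0 \<le> Re w"
  proof (cases "\<alpha> \<le> \<bar>Re z - L\<bar>")
    case True
    then have "1 \<le> (Re z - L) / \<alpha> \<or> (Re z - L) / \<alpha> \<le> -1"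
      using \<alpha> by (auto simp: abs_le_iff le_divide_eq divide_le_eq)
    moreover have "2 \<le> exp (1::real)" using exp_ge_add_one_self[of 1] by simp
    moreover then have "exp (-1::real) \<le> 1/2" by (simp add: exp_minus field_simps)
    ultimately show ?thesis unfolding norm_w
      by (metis exp_le_cancel_iff order.trans)
  next
    case False
    then have L_pos: "0 < L" and close: "\<bar>Re z - L\<bar> < L / 5"
      using \<alpha> L p by (auto simp: abs_if split: if_splits)
    \<comment> \<open>the argument Im z / alpha of w is then within pi/2 of 2 pi\<close>
    have "\<bar>Im z / \<alpha>\<bar> = 2 * pi * L / Re z"
      using Im \<alpha> p L_pos by (simp add: abs_mult abs_divide field_simps)
    moreover have "4 * L < 5 * Re z" "5 * Re z < 6 * L" using close[unfolded abs_less_iff] by linarith+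
    then have "3 * pi / 2 \<le> 2 * pi * L / Re z" "2 * pi * L / Re z \<le> 5 * pi / 2"
      using p by (simp_all add: field_simps)
    ultimately have "0 \<le> cos (Im z / \<alpha>)"
      by (metis cos_abs_real cos_nonneg_three_halves_pi)
    then show ?thesis by (simp add: w_def Re_exp Im_divide_of_real)
  qed
  then show ?thesis
    using norm_one_plus_ge_half_max norm_w unfolding w_def by metis
qed

lemma norm_one_plus_exp_horizontal_ge:
  assumes "0 < \<alpha>" "5 * \<alpha> \<le> \<bar>L\<bar>" "\<bar>b\<bar> = 4 * \<alpha> * pi * \<bar>L\<bar>"
  shows "max 1 (exp ((re_sqrt b t - L) / \<alpha>)) / 2
           \<le> norm (1 + exp ((csqrt (Complex t b) - of_real L) / of_real \<alpha>))"
proof -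
  have "b \<noteq> 0" using assms by auto
  then have "0 < Re (csqrt (Complex t b))" using re_sqrt_pos by (simp add: re_sqrt_def)
  moreover have "\<bar>Re (csqrt (Complex t b)) * Im (csqrt (Complex t b))\<bar> = 2 * \<alpha> * pi * \<bar>L\<bar>"
    using assms(3) by (simp add: Re_mult_Im_csqrt del: csqrt.simps)
  ultimately show ?thesis
    using norm_one_plus_exp_ge[OF assms(1,2)] by (simp add: re_sqrt_def del: csqrt.simps)
qed

lemma fA_denominator_eq:
  fixes z :: complex
  assumes "0 < x" "\<alpha> \<noteq> 0" "L = T + \<alpha> * ln x"
  shows "exp ((z - of_real T) / of_real \<alpha>) + of_real x
           = of_real x * (1 + exp ((z - of_real L) / of_real \<alpha>))"
proof -
  have "(z - of_real T) / of_real \<alpha> = (z - of_real L) / of_real \<alpha> + of_real ((L - T) / \<alpha>)"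
    by (simp add: diff_divide_distrib add_divide_distrib)
  moreover have "(L - T) / \<alpha> = ln x" using assms(2,3) by simp
  ultimately have "(z - of_real T) / of_real \<alpha> = (z - of_real L) / of_real \<alpha> + of_real (ln x)"
    by simp
  then show ?thesis using assms(1) by (simp add: exp_add exp_of_real algebra_simps)
qed

lemma norm_fA_eq:
  assumes "0 < x" "\<alpha> \<noteq> 0" "L = T + \<alpha> * ln x"
  shows "norm (fA \<alpha> T u x) = \<bar>sin (\<alpha> * pi) / (\<alpha> * pi)\<bar> * x powr \<alpha> * exp (Re (csqrt u) - L)
           / (2 * norm (csqrt u) * norm (1 + exp ((csqrt u - of_real L) / of_real \<alpha>)))"
proof -
  have "exp (Re (csqrt u) - T) = x powr \<alpha> * exp (Re (csqrt u) - L)"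
    using assms by (simp add: powr_def exp_add[symmetric])
  then show ?thesis
    using assms
    by (simp add: fA_def fA_denominator_eq[OF assms] norm_mult norm_divide norm_exp_eq_Re
        abs_mult del: csqrt.simps)
qed

lemma fA_horizontal_denominator_nonzero:
  assumes "0 < \<alpha>" "0 < x" "L = T + \<alpha> * ln x" "5 * \<alpha> \<le> \<bar>L\<bar>" "\<bar>b\<bar> = 4 * \<alpha> * pi * \<bar>L\<bar>"
  shows "exp ((csqrt (Complex t b) - of_real T) / of_real \<alpha>) + of_real x \<noteq> 0"
proof -
  have "0 < norm (1 + exp ((csqrt (Complex t b) - of_real L) / of_real \<alpha>))"
    using norm_one_plus_exp_horizontal_ge[OF assms(1,4,5), of t] by linarith
  then show ?thesis using assms(1-3) by (simp add: fA_denominator_eq)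
qed

lemma norm_fA_horizontal_le_max:
  fixes t :: real
  assumes \<alpha>: "0 < \<alpha>" "\<alpha> < 1" and "0 < x" "L = T + \<alpha> * ln x" "5 * \<alpha> \<le> \<bar>L\<bar>"
    and b: "\<bar>b\<bar> = 4 * \<alpha> * pi * \<bar>L\<bar>"
  defines "P \<equiv> re_sqrt b t"
  shows "norm (fA \<alpha> T (Complex t b) x)
           \<le> sin (\<alpha> * pi) / (\<alpha> * pi) * x powr \<alpha> * exp (P - L) / (P * max 1 (exp ((P - L) / \<alpha>)))"
proof -
  define z where "z = csqrt (Complex t b)"
  define A where "A = sin (\<alpha> * pi) / (\<alpha> * pi) * x powr \<alpha> * exp (P - L)"
  have sin: "0 \<le> sin (\<alpha> * pi)" using \<alpha> by (intro sin_ge_zero) auto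
  then have A: "0 \<le> A" unfolding A_def using \<alpha> by simp
  have P: "0 < P" unfolding P_def using b \<alpha> assms(5) by (intro re_sqrt_pos) auto
  have "P \<le> norm z" using complex_Re_le_cmod[of z] by (simp add: P_def z_def re_sqrt_def del: csqrt.simps)
  moreover have "max 1 (exp ((P - L) / \<alpha>)) \<le> 2 * norm (1 + exp ((z - of_real L) / of_real \<alpha>))"
    using norm_one_plus_exp_horizontal_ge[OF \<alpha>(1) assms(5) b, of t] by (simp add: P_def z_def)
  ultimately have le: "P * max 1 (exp ((P - L) / \<alpha>))
      \<le> norm z * (2 * norm (1 + exp ((z - of_real L) / of_real \<alpha>)))"
    using P by (intro mult_mono) auto
  have pos: "0 < P * max 1 (exp ((P - L) / \<alpha>))" using P by simp
  have "norm (fA \<alpha> T (Complex t b) x)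
      = A / (norm z * (2 * norm (1 + exp ((z - of_real L) / of_real \<alpha>))))"
    using norm_fA_eq[of x \<alpha> L T] assms(3,4) \<alpha> sin
    by (simp add: A_def z_def P_def re_sqrt_def abs_mult mult_ac del: csqrt.simps)
  also have "\<dots> \<le> A / (P * max 1 (exp ((P - L) / \<alpha>)))"
    using A le pos by (intro divide_left_mono) (auto intro: mult_pos_pos order.strict_trans2)
  finally show ?thesis unfolding A_def .
qed

lemma norm_fA_horizontal_le:
  fixes t :: real
  assumes \<alpha>: "0 < \<alpha>" "\<alpha> < 1" and x: "0 < x" and L: "L = T + \<alpha> * ln x" "5 * \<alpha> \<le> \<bar>L\<bar>"
    and b: "\<bar>b\<bar> = 4 * \<alpha> * pi * \<bar>L\<bar>" and t: "0 \<le> t" and k: "k = 1 \<or> k = 1 - 1 / \<alpha>"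
  shows "norm (fA \<alpha> T (Complex t b) x) \<le> sin (\<alpha> * pi) / (\<alpha> * pi) * x powr \<alpha>
           * (exp (k * (re_sqrt b t - L)) * (2 * re_sqrt b t / sqrt (t\<^sup>2 + b\<^sup>2)))"
proof -
  define P where "P = re_sqrt b t"
  define K where "K = sin (\<alpha> * pi) / (\<alpha> * pi) * x powr \<alpha>"
  have "b \<noteq> 0" using b \<alpha> L(2) by auto
  then have P: "0 < P" unfolding P_def by (rule re_sqrt_pos)
  have K: "0 \<le> K" unfolding K_def using \<alpha> by (simp add: sin_ge_zero)
  have decay: "exp (P - L) / max 1 (exp ((P - L) / \<alpha>)) \<le> exp (k * (P - L))"
    using k
  proof
    assume "k = 1"
    then show ?thesis by (simp add: divide_le_eq)
  next
    assume k: "k = 1 - 1 / \<alpha>"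
    have "k * (P - L) = (P - L) - (P - L) / \<alpha>" unfolding k using \<alpha> by (simp add: field_simps)
    then have "exp (k * (P - L)) = exp (P - L) / exp ((P - L) / \<alpha>)" by (simp add: exp_diff)
    then show ?thesis by (simp add: frac_le)
  qed
  have "norm (fA \<alpha> T (Complex t b) x) \<le> K * exp (P - L) / (P * max 1 (exp ((P - L) / \<alpha>)))"
    using norm_fA_horizontal_le_max[OF \<alpha> x L b, of t] unfolding K_def P_def .
  also have "\<dots> = K * (exp (P - L) / max 1 (exp ((P - L) / \<alpha>))) * (1 / P)" by simp
  also have "\<dots> \<le> K * exp (k * (P - L)) * (1 / P)"
    using decay K P by (intro mult_right_mono mult_left_mono) auto
  also have "\<dots> \<le> K * exp (k * (P - L)) * (2 * P / sqrt (t\<^sup>2 + b\<^sup>2))"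
    using one_div_re_sqrt_le[OF \<open>b \<noteq> 0\<close> t] K by (intro mult_left_mono) (auto simp: P_def)
  finally show ?thesis by (simp add: K_def P_def mult.assoc)
qed

lemma isCont_fA:
  assumes "\<alpha> \<noteq> 0" "u \<notin> \<real>\<^sub>\<le>\<^sub>0"
    and "exp ((csqrt u - of_real T) / of_real \<alpha>) + of_real x \<noteq> 0"
  shows "isCont (\<lambda>u. fA \<alpha> T u x) u"
proof -
  have "csqrt u \<noteq> 0" using assms(2) by (auto simp: complex_nonpos_Reals_iff)
  then have "isCont (\<lambda>z. complex_of_real (sin (\<alpha> * pi) / (\<alpha> * pi)) * (1 / (2 * z)) *
      (complex_of_real x * exp (z - complex_of_real T)) /
      (exp ((z - complex_of_real T) / complex_of_real \<alpha>) + complex_of_real x)) (csqrt u)"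
    using assms(1,3) by (intro continuous_intros) auto
  then show ?thesis
    unfolding fA_def using isCont_o2[OF continuous_at_csqrt[OF assms(2)]] by blast
qed

lemma continuous_on_fA_horizontal:
  assumes "0 < \<alpha>" "0 < x" "L = T + \<alpha> * ln x" "5 * \<alpha> \<le> \<bar>L\<bar>" "\<bar>b\<bar> = 4 * \<alpha> * pi * \<bar>L\<bar>"
  shows "continuous_on S (\<lambda>t. fA \<alpha> T (Complex t b) x)"
proof (rule continuous_at_imp_continuous_on, intro ballI)
  fix t
  have "b \<noteq> 0" using assms by auto
  then have "Complex t b \<notin> \<real>\<^sub>\<le>\<^sub>0" by (auto simp: complex_nonpos_Reals_iff)
  then have "isCont (\<lambda>u. fA \<alpha> T u x) (Complex t b)"
    using assms by (intro isCont_fA fA_horizontal_denominator_nonzero) auto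
  moreover have "isCont (\<lambda>t. Complex t b) t" unfolding Complex_eq by (intro continuous_intros)
  ultimately show "isCont (\<lambda>t. fA \<alpha> T (Complex t b) x) t" using isCont_o2 by blast
qed

lemma sin_pi_mult_div_le:
  fixes \<alpha> :: real
  assumes "0 < \<alpha>" "\<alpha> < 1"
  shows "sin (\<alpha> * pi) / (\<alpha> * pi) \<le> 2 * (1 - \<alpha>)"
proof (cases "\<alpha> \<le> 1/2")
  case True
  have "sin (\<alpha> * pi) \<le> \<alpha> * pi" using assms by (intro sin_x_le_x) simp
  then have "sin (\<alpha> * pi) / (\<alpha> * pi) \<le> 1" using assms by (simp add: pos_divide_le_eq)
  then show ?thesis using True by simp
next
  case False
  have "sin (\<alpha> * pi) = sin ((1 - \<alpha>) * pi)" by (simp add: algebra_simps sin_diff)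
  also have "\<dots> \<le> (1 - \<alpha>) * pi" using assms by (intro sin_x_le_x) simp
  also have "\<dots> \<le> ((1 - \<alpha>) * (2 * \<alpha>)) * pi"
    using assms False by (intro mult_right_mono mult_left_mono) auto
  also have "\<dots> = 2 * (1 - \<alpha>) * (\<alpha> * pi)" by simp
  finally show ?thesis using assms by (simp add: pos_divide_le_eq)
qed

lemma fA_horizontal_integral_bound:
  fixes \<phi> :: "real \<Rightarrow> complex"
  assumes \<alpha>: "0 < \<alpha>" "\<alpha> < 1" and x: "0 < x" and L: "L = T + \<alpha> * ln x" "5 * \<alpha> \<le> \<bar>L\<bar>"
    and b: "\<bar>b\<bar> = 4 * \<alpha> * pi * \<bar>L\<bar>" and h: "0 < h"
    and \<phi>: "continuous_on {h..} \<phi>" "\<And>t. norm (\<phi> t) \<le> 1"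
  defines "F \<equiv> \<lambda>t. fA \<alpha> T (Complex t b) x * \<phi> t"
  shows "F integrable_on {h..}"
    and "norm (integral {h..} F) \<le> 4 * (sin (\<alpha> * pi) / (\<alpha> * pi) * x powr \<alpha>) / (1 - \<alpha>)"
proof -
  define K where "K = sin (\<alpha> * pi) / (\<alpha> * pi) * x powr \<alpha>"
  define G where "G = (\<lambda>k t. K * (exp (k * (re_sqrt b t - L)) * (2 * re_sqrt b t / sqrt (t\<^sup>2 + b\<^sup>2))))"
  define k where "k = 1 - 1 / \<alpha>"
  have "b \<noteq> 0" using b \<alpha> L(2) by auto
  have K: "0 \<le> K" unfolding K_def using \<alpha> by (simp add: sin_ge_zero)
  have k: "k < 0" "- 4 / k = 4 * \<alpha> / (1 - \<alpha>)" unfolding k_def using \<alpha> by (simp_all add: field_simps)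
  have F_le: "norm (F t) \<le> G j t" if "t \<in> {h..}" "j = 1 \<or> j = k" for t j
  proof -
    have "norm (F t) \<le> norm (fA \<alpha> T (Complex t b) x)"
      unfolding F_def norm_mult using \<phi>(2)[of t] by (simp add: mult_left_le)
    also have "\<dots> \<le> G j t"
      using norm_fA_horizontal_le[OF \<alpha> x L b _ that(2)[unfolded k_def]] that(1) h
      unfolding G_def K_def by (simp add: mult.assoc)
    finally show ?thesis .
  qed
  have F_cont: "continuous_on S F" if "S \<subseteq> {h..}" for S
    unfolding F_def using continuous_on_fA_horizontal[OF \<alpha>(1) x L b] continuous_on_subset[OF \<phi>(1) that]
    by (intro continuous_on_mult) auto
  \<comment> \<open>below t1 the envelope with k = 1 is integrated, beyond t1 the one with k < 0\<close>
  obtain t1 where t1: "h \<le> t1" "L \<le> re_sqrt b t1" "t1 = h \<or> re_sqrt b t1 = L"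
    using re_sqrt_level_point[OF \<open>b \<noteq> 0\<close>] .
  obtain I1 where I1: "I1 \<le> 4" "(G 1 has_integral K * I1) {h..t1}"
    using has_integral_exp_re_sqrt_below_level[OF \<open>b \<noteq> 0\<close> t1(1,3)] unfolding G_def
    by (blast dest: has_integral_mult_right[where c = K])
  obtain I2 where I2: "I2 \<le> 4 * \<alpha> / (1 - \<alpha>)" "(G k has_integral K * I2) {t1..}"
    using has_integral_exp_re_sqrt_above_level[OF \<open>b \<noteq> 0\<close> k(1) t1(2)] unfolding G_def k(2)
    by (blast dest: has_integral_mult_right[where c = K])
  have int1: "F integrable_on {h..t1}" "norm (integral {h..t1} F) \<le> K * I1"
    using continuous_on_dominated_integral[OF F_cont _ I1(2)] F_le by auto
  have int2: "F integrable_on {t1..}" "norm (integral {t1..} F) \<le> K * I2"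
    using continuous_on_dominated_integral[OF F_cont _ I2(2)] F_le t1(1) by auto
  have "K * I1 + K * I2 \<le> K * 4 + K * (4 * \<alpha> / (1 - \<alpha>))"
    using I1(1) I2(1) K by (intro add_mono mult_left_mono)
  also have "\<dots> = 4 * K / (1 - \<alpha>)" using \<alpha> by (simp add: field_simps)
  finally have "norm (integral {h..t1} F) + norm (integral {t1..} F) \<le> 4 * K / (1 - \<alpha>)"
    using int1(2) int2(2) by linarith
  then show "F integrable_on {h..}" "norm (integral {h..} F) \<le> 4 * K / (1 - \<alpha>)"
    using integral_atLeast_split[OF t1(1) int1(1) int2(1)] norm_triangle_ineq order_trans
    by metis+
qed

lemma M0A_ge: "18 * pi\<^sup>2 / \<sigma>\<^sup>2 \<le> M0A \<sigma>"
proof -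
  define q where "q = 9 * pi\<^sup>2 / \<sigma>\<^sup>2"
  have "18 * pi\<^sup>2 / \<sigma>\<^sup>2 = 2 * q" by (simp add: q_def)
  moreover have "q \<le> real_of_int \<lceil>q\<rceil>" by (rule le_of_int_ceiling)
  moreover have "1 + real_of_int \<lceil>q\<rceil> \<le> max (\<sigma>\<^sup>2 / 4)
      (max (1 + real_of_int \<lceil>q\<rceil>) (2 * real_of_int \<lceil>(1 + sqrt (pi / \<sigma>)) ^ 4\<rceil>))"
    by simp
  ultimately show ?thesis unfolding M0A_def q_def[symmetric] by argo
qed

lemma UpsilonA_bounds:
  assumes "0 < \<alpha>" "0 < \<sigma>" "x \<in> UpsilonA \<alpha> \<sigma> N1"
  shows "0 < x" "5 * \<alpha> \<le> \<bar>TA \<alpha> \<sigma> N1 + \<alpha> * ln x\<bar>"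
proof -
  show "0 < x"
    using assms(3) exp_gt_zero unfolding UpsilonA_def xstarA_def by (blast intro: less_le_trans)
  have "M0A \<sigma> * hA \<alpha> \<sigma> < (TA \<alpha> \<sigma> N1 + \<alpha> * ln x)\<^sup>2 - \<alpha>\<^sup>2 * pi\<^sup>2"
    using assms(3) unfolding UpsilonA_def by simp
  moreover have "18 * pi\<^sup>2 / \<sigma>\<^sup>2 * hA \<alpha> \<sigma> \<le> M0A \<sigma> * hA \<alpha> \<sigma>"
    using M0A_ge by (intro mult_right_mono) (auto simp: hA_def)
  moreover have "18 * pi\<^sup>2 / \<sigma>\<^sup>2 * hA \<alpha> \<sigma> = 18 * (\<alpha>\<^sup>2 * pi\<^sup>2)"
    using assms(2) by (simp add: hA_def)
  moreover have "\<alpha>\<^sup>2 * 9 \<le> \<alpha>\<^sup>2 * pi\<^sup>2"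
  proof (rule mult_left_mono)
    show "9 \<le> pi\<^sup>2" using mult_mono[of 3 pi 3 pi] pi_gt3 by (simp add: power2_eq_square)
  qed simp
  ultimately have "25 * \<alpha>\<^sup>2 \<le> (TA \<alpha> \<sigma> N1 + \<alpha> * ln x)\<^sup>2"
    using zero_le_power2[of \<alpha>] by linarith
  then have "(5 * \<alpha>)\<^sup>2 \<le> \<bar>TA \<alpha> \<sigma> N1 + \<alpha> * ln x\<bar>\<^sup>2" by (simp add: power_mult_distrib)
  then show "5 * \<alpha> \<le> \<bar>TA \<alpha> \<sigma> N1 + \<alpha> * ln x\<bar>" by (rule power2_le_imp_le) simp
qed

lemma halfline_integral_shift:
  fixes \<alpha> T x h \<kappa> s a :: real and c :: complex
  assumes \<alpha>: "0 < \<alpha>" "\<alpha> < 1" and x: "0 < x" and L: "5 * \<alpha> \<le> \<bar>T + \<alpha> * ln x\<bar>"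
    and h: "0 < h" and s: "s \<in> {1, -1}" and a: "a = 2 * \<alpha> * pi * (T + \<alpha> * ln x)"
    and c: "c = complex_of_real (s * 2 * a) * \<i>"
  defines "g \<equiv> \<lambda>u. fA \<alpha> T u x * exp (complex_of_real s * \<i> * complex_of_real \<kappa> * u)"
    and "F \<equiv> \<lambda>t. fA \<alpha> T (complex_of_real t + c) x * exp (complex_of_real s * \<i> * complex_of_real (\<kappa> * t))"
  shows "(\<lambda>t. g (complex_of_real t + c)) integrable_on {h..}"
    and "norm (halfline_integral g h c) = exp (- 2 * \<kappa> * a) * norm (integral {h..} F)"
    and "norm (integral {h..} F) \<le> 8 * x powr \<alpha>"
proof -
  have shift: "g (complex_of_real t + c) = exp (- 2 * \<kappa> * a) * F t" for t
  proof -
    have "complex_of_real s * \<i> * complex_of_real \<kappa> * (complex_of_real t + c)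
        = complex_of_real s * \<i> * complex_of_real (\<kappa> * t) + complex_of_real (- 2 * \<kappa> * a)"
      using s by (auto simp: c algebra_simps)
    then have "exp (complex_of_real s * \<i> * complex_of_real \<kappa> * (complex_of_real t + c))
        = exp (complex_of_real s * \<i> * complex_of_real (\<kappa> * t)) * exp (- 2 * \<kappa> * a)"
      by (simp only: exp_add exp_of_real)
    then show ?thesis by (simp add: g_def F_def mult_ac)
  qed
  have line: "complex_of_real t + c = Complex t (s * 2 * a)" for t by (simp add: c Complex_eq)
  have b: "\<bar>s * 2 * a\<bar> = 4 * \<alpha> * pi * \<bar>T + \<alpha> * ln x\<bar>"
    using s \<alpha> by (auto simp: a abs_mult)
  have \<phi>: "continuous_on {h..} (\<lambda>t. exp (complex_of_real s * \<i> * complex_of_real (\<kappa> * t)))"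
    by (intro continuous_intros)
  have "norm (exp (complex_of_real s * \<i> * complex_of_real (\<kappa> * t))) \<le> 1" for t
    by (simp add: norm_exp_eq_Re)
  with fA_horizontal_integral_bound[OF \<alpha> x refl L b h \<phi>]
  have F: "F integrable_on {h..}"
    "norm (integral {h..} F) \<le> 4 * (sin (\<alpha> * pi) / (\<alpha> * pi) * x powr \<alpha>) / (1 - \<alpha>)"
    unfolding F_def line by auto
  have "4 * (sin (\<alpha> * pi) / (\<alpha> * pi) * x powr \<alpha>) / (1 - \<alpha>)
      \<le> 4 * (2 * (1 - \<alpha>) * x powr \<alpha>) / (1 - \<alpha>)"
    using sin_pi_mult_div_le[OF \<alpha>] \<alpha> by (intro divide_right_mono mult_left_mono mult_right_mono) auto
  also have "\<dots> = 8 * x powr \<alpha>" using \<alpha> by (simp add: field_simps)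
  finally have "norm (integral {h..} F) \<le> 8 * x powr \<alpha>" using F(2) by linarith
  with F(1) show "(\<lambda>t. g (complex_of_real t + c)) integrable_on {h..}"
    and "norm (halfline_integral g h c) = exp (- 2 * \<kappa> * a) * norm (integral {h..} F)"
    and "norm (integral {h..} F) \<le> 8 * x powr \<alpha>"
    by (simp_all add: shift halfline_integral_def norm_mult)
qed

theorem lemmaA3:
  fixes n :: nat
  assumes "n \<ge> 1"
  shows "\<exists>C::real. \<forall>(\<alpha>::real) (\<sigma>::real) (N1::nat) (x::real) (s::real).
     0 < \<alpha> \<and> \<alpha> < 1 \<and> 0 < \<sigma> \<and> N1 \<ge> 1 \<and> s \<in> {1, -1} \<and> x \<in> UpsilonA \<alpha> \<sigma> N1 \<longrightarrow>
     (let h = hA \<alpha> \<sigma>; T = TA \<alpha> \<sigma> N1; a = 2 * \<alpha> * pi * (T + \<alpha> * ln x);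
          c = complex_of_real (s * 2 * a) * \<i>;
          g = (\<lambda>u. fA \<alpha> T u x * exp (complex_of_real s * \<i> * complex_of_real (2 * real n * pi / h) * u))
      in (\<lambda>t. g (complex_of_real t + c)) integrable_on {h..} \<and>
         norm (halfline_integral g h c) =
           exp (- 4 * real n * pi * a / h) *
           norm (integral {h..} (\<lambda>t. fA \<alpha> T (complex_of_real t + c) x *
                   exp (complex_of_real s * \<i> * complex_of_real (2 * real n * pi * t / h)))) \<and>
         exp (- 4 * real n * pi * a / h) *
           norm (integral {h..} (\<lambda>t. fA \<alpha> T (complex_of_real t + c) x *
                   exp (complex_of_real s * \<i> * complex_of_real (2 * real n * pi * t / h))))
           \<le> exp (- 4 * real n * pi * a / h) * (x powr \<alpha> * C))"
  apply (intro exI[of _ 8] allI impI, unfold Let_def, elim conjE)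
  subgoal premises prems for \<alpha> \<sigma> N1 x s
  proof -
    have \<alpha>: "0 < \<alpha>" "\<alpha> < 1" and \<sigma>: "0 < \<sigma>" using prems by auto
    have h: "0 < hA \<alpha> \<sigma>" using \<alpha> \<sigma> by (simp add: hA_def)
    have freq: "2 * real n * pi * t / hA \<alpha> \<sigma> = 2 * real n * pi / hA \<alpha> \<sigma> * t" for t by simp
    have decay: "- 2 * (2 * real n * pi / hA \<alpha> \<sigma>) * a = - 4 * real n * pi * a / hA \<alpha> \<sigma>" for a
      by simp
    note shift = halfline_integral_shift[OF \<alpha> UpsilonA_bounds[OF \<alpha>(1) \<sigma> prems(6)] h prems(5) refl refl,
        where \<kappa> = "2 * real n * pi / hA \<alpha> \<sigma>", unfolded freq[symmetric] decay]
    show ?thesis using shift by (simp add: mult.commute)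
  qed
  done

end
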